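(* Let $C$ be the positively oriented unit circle, $g=1$ on $\{\operatorname{Re}z>0\}\cap C$ and $g=-1$ on $\{\operatorname{Re}z<0\}\cap C$, $g_l=\frac{2}{l\pi}\sin\frac{l\pi}{2}$ ($l\ne0$), $g_0=0$, $\lambda\in\mathbb{C}\setminus[-1,1]$, $\phi=g+\lambda$, and $\vec{\mathfrak g}_1=(g_{-m},\dots,g_{-1})^T\in\mathbb{C}^m$. Let $Y_K$ be the unique solution of the Riemann–Hilbert problem: $Y_K\colon\mathbb{C}\setminus C\to\mathbb{C}^{2\times2}$ is analytic, $$Y_{K+}(z)=Y_{K-}(z)\begin{pmatrix}\phi(z)&-(\phi(z)-1)z^m\\(\phi(z)-1)z^{-m}&2-\phi(z)\end{pmatrix}\quad\text{for a.e. } z\in C$$ (in the $L^2$ sense, with $+$/$-$ denoting boundary values from the left/right of the positively oriented circle), and $Y_K(z)=I+O(z^{-1})$ as $z\to\infty$. Write $Y_K(z)=I+\sum_{\ell=1}^\infty M_\ell z^{-\ell}$ as $z\to\infty$. Then $$\big\langle T_m[\phi]^{-1}\vec{\mathfrak g}_1,\vec{\mathfrak g}_1\big\rangle=-\frac{2}{\pi}\sum_{\ell=1}^m\frac{\sin\frac{\ell\pi}{2}}{\ell}\,M_{\ell,11},$$ where $M_{\ell,11}$ is the $(1,1)$ entry of $M_\ell$.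
   Context: $T_m[\phi]=(\phi_{j-k})_{j,k=0}^{m-1}$ is the Toeplitz matrix of Fourier coefficients of $\phi$; $\langle\vec a,\vec b\rangle=\sum_j a_jb_j$. *)

theory Defs
  imports "HOL-Analysis.Analysis" "Jordan_Normal_Form.Gauss_Jordan_Elimination"
begin

definition fourier_coeff :: "(complex \<Rightarrow> complex) \<Rightarrow> int \<Rightarrow> complex" where
  "fourier_coeff f k = integral {0..2*pi} (\<lambda>t. f (cis t) * cis (- (of_int k * t))) / (2 * pi)"

definition toeplitz_mat :: "nat \<Rightarrow> (complex \<Rightarrow> complex) \<Rightarrow> complex mat" where
  "toeplitz_mat m f = mat m m (\<lambda>(j,k). fourier_coeff f (int j - int k))"

text \<open>The step function g on the unit circle (value at the two points with Re z = 0 is irrelevant).\<close>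
definition g_fun :: "complex \<Rightarrow> complex" where
  "g_fun z = (if Re z > 0 then 1 else if Re z < 0 then -1 else 0)"

definition g_coeff :: "int \<Rightarrow> complex" where
  "g_coeff l = (if l = 0 then 0 else of_real (2 / (real_of_int l * pi) * sin (real_of_int l * pi / 2)))"

definition g_vec1 :: "nat \<Rightarrow> complex vec" where
  "g_vec1 m = vec m (\<lambda>j. g_coeff (int j - int m))"

definition entry :: "complex^2^2 \<Rightarrow> 2 \<Rightarrow> 2 \<Rightarrow> complex" where
  "entry A i j = Finite_Cartesian_Product.vec_nth (Finite_Cartesian_Product.vec_nth A i) j"

definition jump_mat :: "nat \<Rightarrow> (complex \<Rightarrow> complex) \<Rightarrow> complex \<Rightarrow> complex^2^2" where
  "jump_mat m \<phi> z = vector [vector [\<phi> z, - (\<phi> z - 1) * z ^ m],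
                             vector [(\<phi> z - 1) * inverse z ^ m, 2 - \<phi> z]]"

text \<open>Yb is the L2 boundary value of Y on the unit circle, approached along radii r \<rightarrow> 1 in the
  filter F (at_left 1: from inside = + side; at_right 1: from outside = - side).\<close>
definition L2_boundary_value ::
  "(complex \<Rightarrow> complex^2^2) \<Rightarrow> (complex \<Rightarrow> complex^2^2) \<Rightarrow> real filter \<Rightarrow> bool" where
  "L2_boundary_value Y Yb F \<longleftrightarrow>
     (\<forall>\<^sub>F r in F. (\<lambda>t. (norm (Y (of_real r * cis t) - Yb (cis t)))\<^sup>2) integrable_on {0..2*pi}) \<and>
     ((\<lambda>r. integral {0..2*pi} (\<lambda>t. (norm (Y (of_real r * cis t) - Yb (cis t)))\<^sup>2)) \<longlongrightarrow> 0) F"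

definition RHP_YK :: "nat \<Rightarrow> (complex \<Rightarrow> complex) \<Rightarrow> (complex \<Rightarrow> complex^2^2) \<Rightarrow> bool" where
  "RHP_YK m \<phi> Y \<longleftrightarrow>
     (\<forall>i j. (\<lambda>z. entry (Y z) i j) holomorphic_on (- sphere 0 1)) \<and>
     (\<exists>Yp Ym. L2_boundary_value Y Yp (at_left 1) \<and> L2_boundary_value Y Ym (at_right 1) \<and>
        (AE t in lebesgue_on {0..2*pi}. Yp (cis t) = Ym (cis t) ** jump_mat m \<phi> (cis t))) \<and>
     (\<exists>c R. \<forall>z. norm z \<ge> R \<longrightarrow> norm (Y z - Finite_Cartesian_Product.mat 1) \<le> c / norm z)"

end

(* The first column of the jump relation says that
   H(z) = z^m Y_11(z) + Y_12(z) has no jump across the circle.  Comparing the Fourier coefficients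
   of its boundary values from inside (Taylor series of H) and from outside (Y = I + sum M_l z^-l)
   shows that H is the monic polynomial z^m + sum_{n<m} M_{m-n,11} z^n.  The (1,1) entry of the
   jump relation, Y_11+ - Y_11- = (phi - 1) z^-m H, compared at the Fourier modes -1, ..., -m,
   then says that (-M_{m,11}, ..., -M_{1,11}) solves T_m[phi] x = (phi_-m, ..., phi_-1), and
   phi_-l = g_-l turns <x, g_1> into the stated sum.

   T_m[phi] is invertible: for the trigonometric polynomial p with coefficient vector v, the form
   v* T_m[phi] v is 1/(2 pi) times the integral of (g + lam)|p|^2 over the circle; the integral of
   g|p|^2 is real and bounded in modulus by that of |p|^2, so a vanishing form forces lam into
   [-1,1] unless p = 0.

   The boundary values are only L2 limits, so each comparison of Fourier coefficients is made on
   the circles of radii r and 2 - r and then passed to the limit r -> 1. *)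

theory Submission
  imports Defs "HOL-Complex_Analysis.Complex_Analysis" "Jordan_Normal_Form.Determinant"
begin

section \<open>Fourier integrals on the unit circle\<close>

lemma has_integral_eqI:
  assumes "(f has_integral I) S" "\<And>x. x \<in> S \<Longrightarrow> f x = g x" "I = J"
  shows "(g has_integral J) S"
  using has_integral_eq[OF assms(2,1)] assms(3) by simp

lemma has_integral_exp_linear:
  fixes c :: complex and a b :: real
  assumes "c \<noteq> 0" "a \<le> b"
  shows "((\<lambda>t. exp (c * of_real t)) has_integral ((exp (c * of_real b) - exp (c * of_real a)) / c)) {a..b}"
proof -
  have "((\<lambda>t. exp (c * of_real t) / c) has_vector_derivative exp (c * of_real x)) (at x within {a..b})" for x
  proof -
    have "((\<lambda>z. exp (c * z) / c) has_field_derivative (exp (c * of_real x) * (c * 1)) / c) (at (of_real x))"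
      by (auto intro!: derivative_eq_intros)
    then have "((\<lambda>z. exp (c * z) / c) has_field_derivative exp (c * of_real x)) (at (of_real x))"
      using assms by simp
    from has_vector_derivative_real_field[OF this] show ?thesis by simp
  qed
  from fundamental_theorem_of_calculus[OF assms(2) this]
  show ?thesis by (simp add: diff_divide_distrib)
qed

lemma has_integral_cis_int:
  fixes j :: int
  shows "((\<lambda>t. cis (of_int j * t)) has_integral (if j = 0 then 2 * pi else 0)) {0..2*pi}"
proof (cases "j = 0")
  case True
  then show ?thesis using has_integral_const_real[of "1::complex" 0 "2*pi"] by (simp add: scaleR_conv_of_real)
next
  case False
  have c: "\<i> * of_int j \<noteq> (0::complex)" using False by simp
  have e: "cis (of_int j * t) = exp ((\<i> * of_int j) * of_real t)" for t
    by (simp add: cis_conv_exp mult_ac)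
  have "exp ((\<i> * of_int j) * of_real (2*pi)) = 1"
    using cis_multiple_2pi[of "of_int j"] by (simp add: cis_conv_exp[symmetric] mult_ac)
  with has_integral_exp_linear[OF c, of 0 "2*pi"] False show ?thesis
    by (simp add: e)
qed

lemma has_integral_cis_interval:
  fixes k :: int
  assumes "k \<noteq> 0" "a \<le> b"
  shows "((\<lambda>t. cis (- (of_int k * t))) has_integral
           (cis (- (of_int k * b)) - cis (- (of_int k * a))) / (- \<i> * of_int k)) {a..b}"
proof -
  have "cis (- (of_int k * t)) = exp ((- \<i> * of_int k) * of_real t)" for t
    by (simp add: cis_conv_exp mult.assoc)
  with has_integral_exp_linear[of "- \<i> * of_int k" a b] assms show ?thesis by simp
qed

lemma has_integral_trigonometric_series:
  fixes a :: "nat \<Rightarrow> complex" and f :: "nat \<Rightarrow> int" and n :: int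
  assumes sa: "summable (\<lambda>l. norm (a l))"
  shows "((\<lambda>t. (\<Sum>l. a l * cis (of_int (f l) * t)) * cis (- (of_int n * t))) has_integral
           (2 * pi * (\<Sum>l. if f l = n then a l else 0))) {0..2*pi}"
proof -
  define h where "h l t = a l * cis (of_int (f l - n) * t)" for l t
  have "norm (h l t) \<le> norm (a l)" for l t by (simp add: h_def norm_mult)
  then have ul: "uniform_limit {0..2*pi} (\<lambda>N t. \<Sum>l<N. h l t) (\<lambda>t. \<Sum>l. h l t) sequentially"
    by (intro Weierstrass_m_test[OF _ sa]) auto
  have cont: "continuous_on {0..2*pi} (\<lambda>t. \<Sum>l<N. h l t)" for N
    unfolding h_def by (intro continuous_intros)
  obtain I J where I: "\<And>N. ((\<lambda>t. \<Sum>l<N. h l t) has_integral I N) {0..2*pi}"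
    and J: "((\<lambda>t. \<Sum>l. h l t) has_integral J) {0..2*pi}" and IJ: "I \<longlonglongrightarrow> J"
    using uniform_limit_integral[OF ul cont] by auto
  define c where "c l = (if f l = n then a l else 0)" for l
  have h_int: "(h l has_integral (2 * pi * c l)) {0..2*pi}" for l
    using has_integral_mult_right[OF has_integral_cis_int[of "f l - n"], of "a l"]
    unfolding h_def c_def by (cases "f l = n") (auto simp: mult_ac)
  have "I N = (\<Sum>l<N. 2 * pi * c l)" for N
    using has_integral_unique[OF I has_integral_sum[OF _ h_int]] by auto
  then have "I = (\<lambda>N. 2 * pi * (\<Sum>l<N. c l))"
    by (simp add: fun_eq_iff sum_distrib_left)
  moreover have "summable c"
    unfolding c_def by (rule summable_norm_cancel, rule summable_comparison_test[OF _ sa]) auto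
  ultimately have "I \<longlonglongrightarrow> 2 * pi * suminf c"
    by (auto intro: tendsto_mult_left summable_LIMSEQ)
  with IJ have "J = 2 * pi * (\<Sum>l. if f l = n then a l else 0)"
    unfolding c_def by (rule LIMSEQ_unique)
  moreover have "(\<Sum>l. h l t) = (\<Sum>l. a l * cis (of_int (f l) * t)) * cis (- (of_int n * t))" for t
  proof -
    have "summable (\<lambda>l. a l * cis (of_int (f l) * t))"
      by (rule summable_norm_cancel, rule summable_comparison_test[OF _ sa]) (auto simp: norm_mult)
    then have "(\<Sum>l. a l * cis (of_int (f l) * t)) * cis (- (of_int n * t))
        = (\<Sum>l. a l * cis (of_int (f l) * t) * cis (- (of_int n * t)))"
      by (rule suminf_mult2)
    then show ?thesis by (simp add: h_def cis_mult algebra_simps)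
  qed
  ultimately show ?thesis using J by simp
qed

lemma has_integral_holomorphic_on_circle:
  fixes F :: "complex \<Rightarrow> complex" and n :: int and \<rho> :: real
  assumes F: "F holomorphic_on ball 0 1" and \<rho>: "0 \<le> \<rho>" "\<rho> < 1"
  shows "((\<lambda>t. F (of_real \<rho> * cis t) * cis (- (of_int n * t))) has_integral
           (2 * pi * (if n \<ge> 0 then (deriv ^^ nat n) F 0 / fact (nat n) * of_real \<rho> ^ nat n else 0)))
         {0..2*pi}"
proof -
  define c where "c l = (deriv ^^ l) F 0 / fact l" for l
  have F_sums: "(\<lambda>l. c l * w ^ l) sums F w" if "norm w < 1" for w
    using holomorphic_power_series[OF F, of w] that by (simp add: c_def)
  define a where "a l = c l * of_real \<rho> ^ l" for l
  define w0 :: complex where "w0 = of_real ((1 + \<rho>) / 2)"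
  have "norm w0 = (1 + \<rho>) / 2"
    unfolding w0_def norm_of_real using \<rho> by auto
  then have "norm w0 < 1" "norm (of_real \<rho> :: complex) < norm w0"
    using \<rho> by auto
  from powser_insidea[OF sums_summable[OF F_sums[OF this(1)]] this(2)]
  have sa: "summable (\<lambda>l. norm (a l))" by (simp add: a_def)
  have F_eq: "F (of_real \<rho> * cis t) = (\<Sum>l. a l * cis (of_int (int l) * t))" for t
  proof -
    have "norm (of_real \<rho> * cis t) < 1" using \<rho> by (simp add: norm_mult)
    moreover have "c l * (of_real \<rho> * cis t) ^ l = a l * cis (of_int (int l) * t)" for l
      by (simp add: a_def power_mult_distrib Complex.DeMoivre)
    ultimately show ?thesis using sums_unique[OF F_sums] by simp
  qed
  have "(\<Sum>l. if int l = n then a l else 0) = (if n \<ge> 0 then a (nat n) else 0)"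
  proof (cases "n \<ge> 0")
    case True
    then have "(\<lambda>l. if int l = n then a l else 0) = (\<lambda>l. if l = nat n then a l else 0)"
      by (auto simp: fun_eq_iff)
    then show ?thesis using sums_unique[OF sums_single[of "nat n" a]] True by simp
  qed simp
  with has_integral_trigonometric_series[OF sa, of int n] show ?thesis
    unfolding F_eq by (auto simp: a_def c_def)
qed

lemma has_integral_laurent_series_on_circle:
  fixes b :: "nat \<Rightarrow> complex" and G :: "complex \<Rightarrow> complex" and n :: int and s :: real
  assumes G: "\<And>z. norm z > 1 \<Longrightarrow> (\<lambda>l. b (Suc l) / z ^ Suc l) sums G z"
    and s: "s > 1"
  shows "((\<lambda>t. G (of_real s * cis t) * cis (- (of_int n * t))) has_integral
           (2 * pi * (if n < 0 then b (nat (- n)) / of_real s ^ nat (- n) else 0))) {0..2*pi}"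
proof -
  define a where "a l = b (Suc l) / of_real s ^ Suc l" for l
  define s' :: real where "s' = (1 + s) / 2"
  have s': "s' > 1" "s' < s" using s by (auto simp: s'_def)
  have "(\<lambda>l. b (Suc l) / (of_real s') ^ Suc l) sums G (of_real s')" using G[of "of_real s'"] s' by simp
  then have "summable (\<lambda>l. (b (Suc l) / of_real s') * (1 / of_real s') ^ l)"
    by (rule sums_summable[THEN summable_cong[THEN iffD1, rotated]]) (simp add: field_simps)
  moreover have "norm (1 / of_real s :: complex) < norm (1 / of_real s' :: complex)"
    using s' s by (simp add: norm_divide frac_less2)
  ultimately have "summable (\<lambda>l. norm ((b (Suc l) / of_real s') * (1 / of_real s) ^ l))"
    by (rule powser_insidea)
  then have "summable (\<lambda>l. (s' / s) * norm ((b (Suc l) / of_real s') * (1 / of_real s) ^ l))"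
    by (rule summable_mult)
  moreover have "(s' / s) * norm ((b (Suc l) / of_real s') * (1 / of_real s) ^ l) = norm (a l)" for l
    using s s' by (simp add: a_def norm_divide norm_power norm_mult field_simps)
  ultimately have sa: "summable (\<lambda>l. norm (a l))" by (simp only:)
  have G_eq: "G (of_real s * cis t) = (\<Sum>l. a l * cis (of_int (- (int l + 1)) * t))" for t
  proof -
    have "b (Suc l) / (of_real s * cis t) ^ Suc l = a l * cis (of_int (- (int l + 1)) * t)" for l
    proof -
      have p: "(of_real s * cis t) ^ Suc l = of_real s ^ Suc l * cis (real (Suc l) * t)"
        by (simp only: power_mult_distrib Complex.DeMoivre)
      have q: "1 / cis (real (Suc l) * t) = cis (of_int (- (int l + 1)) * t)"
        using cis_divide[of 0 "real (Suc l) * t"] by (simp add: algebra_simps)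
      show ?thesis unfolding p a_def q[symmetric] by (simp add: field_simps)
    qed
    moreover have "norm (of_real s * cis t) > 1" using s by (simp add: norm_mult)
    ultimately show ?thesis using sums_unique[OF G] by simp
  qed
  have "(\<Sum>l. if - (int l + 1) = n then a l else 0) = (if n < 0 then a (nat (- n) - 1) else 0)"
  proof (cases "n < 0")
    case True
    then have "(\<lambda>l. if - (int l + 1) = n then a l else 0) = (\<lambda>l. if l = nat (- n) - 1 then a l else 0)"
      by (auto simp: fun_eq_iff)
    then show ?thesis using sums_unique[OF sums_single[of "nat (- n) - 1" a]] True by simp
  qed simp
  moreover have "n < 0 \<Longrightarrow> a (nat (- n) - 1) = b (nat (- n)) / of_real s ^ nat (- n)"
    by (simp add: a_def Suc_diff_1)
  ultimately show ?thesis using has_integral_trigonometric_series[OF sa, of "\<lambda>l. - (int l + 1)" n]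
    unfolding G_eq by (cases "n < 0") auto
qed

lemma has_integral_fourier_coeff:
  assumes "(\<lambda>t. f (cis t) * cis (- (of_int k * t))) integrable_on {0..2*pi}"
  shows "((\<lambda>t. f (cis t) * cis (- (of_int k * t))) has_integral (2 * pi * fourier_coeff f k)) {0..2*pi}"
  using integrable_integral[OF assms] by (simp add: fourier_coeff_def)

section \<open>Toeplitz quadratic forms and the symbol g + lam\<close>

lemma norm_trigonometric_polynomial_squared:
  fixes v :: "nat \<Rightarrow> complex"
  shows "complex_of_real ((cmod (\<Sum>k<m. v k * cis (real k * t)))\<^sup>2) =
     (\<Sum>j<m. \<Sum>k<m. cnj (v j) * v k * cis (- (of_int (int j - int k) * t)))"
proof -
  have "complex_of_real ((cmod (\<Sum>k<m. v k * cis (real k * t)))\<^sup>2) =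
        cnj (\<Sum>k<m. v k * cis (real k * t)) * (\<Sum>k<m. v k * cis (real k * t))"
    by (subst complex_norm_square) (rule mult.commute)
  also have "\<dots> = (\<Sum>j<m. \<Sum>k<m. cnj (v j) * cis (- (real j * t)) * (v k * cis (real k * t)))"
    by (simp add: cis_cnj sum_product)
  also have "\<dots> = (\<Sum>j<m. \<Sum>k<m. cnj (v j) * v k * cis (- (of_int (int j - int k) * t)))"
    by (intro sum.cong refl) (simp add: algebra_simps cis_mult)
  finally show ?thesis .
qed

lemma has_integral_toeplitz_quadratic_form:
  fixes v :: "nat \<Rightarrow> complex"
  assumes "\<And>k. (\<lambda>t. f (cis t) * cis (- (of_int k * t))) integrable_on {0..2*pi}"
  shows "((\<lambda>t. f (cis t) * of_real ((cmod (\<Sum>k<m. v k * cis (real k * t)))\<^sup>2)) has_integral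
     (2 * pi * (\<Sum>j<m. cnj (v j) * (\<Sum>k<m. fourier_coeff f (int j - int k) * v k)))) {0..2*pi}"
  unfolding norm_trigonometric_polynomial_squared sum_distrib_left
proof (intro has_integral_sum finite_lessThan)
  fix j k
  show "((\<lambda>t. f (cis t) * (cnj (v j) * v k * cis (- (of_int (int j - int k) * t)))) has_integral
      2 * pi * (cnj (v j) * (fourier_coeff f (int j - int k) * v k))) {0..2*pi}"
    using has_integral_mult_right[OF has_integral_fourier_coeff[OF assms[of "int j - int k"]],
        of "cnj (v j) * v k"]
    by (simp only: mult_ac)
qed

lemma has_integral_norm_trigonometric_polynomial_squared:
  fixes v :: "nat \<Rightarrow> complex"
  shows "((\<lambda>t. complex_of_real ((cmod (\<Sum>k<m. v k * cis (real k * t)))\<^sup>2)) has_integral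
           of_real (2 * pi * (\<Sum>k<m. (cmod (v k))\<^sup>2))) {0..2*pi}"
proof -
  have cis_int: "((\<lambda>t. 1 * cis (- (of_int k * t))) has_integral (if k = 0 then 2 * pi else 0)) {0..2*pi}"
    for k
    using has_integral_cis_int[of "- k"] by simp
  have delta: "fourier_coeff (\<lambda>_. 1) (int j - int k) * c = (if j = k then c else 0)" for j k c
    using integral_unique[OF cis_int[of "int j - int k"]] by (simp add: fourier_coeff_def)
  have "cnj (v j) * v j = of_real ((cmod (v j))\<^sup>2)" for j
    by (subst complex_norm_square) (rule mult.commute)
  then have "2 * pi * (\<Sum>j<m. cnj (v j) * (\<Sum>k<m. fourier_coeff (\<lambda>_. 1) (int j - int k) * v k))
      = of_real (2 * pi * (\<Sum>k<m. (cmod (v k))\<^sup>2))"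
    unfolding delta by (simp add: sum.delta)
  with has_integral_toeplitz_quadratic_form[of "\<lambda>_. 1" v m, OF has_integral_integrable[OF cis_int]]
  show ?thesis by simp
qed

lemma g_fun_cis: "g_fun (cis t) = of_real (sgn (cos t))"
  by (simp add: g_fun_def sgn_if)

lemma g_fun_cis_eq_1:
  assumes "t \<in> {0..2*pi} - {pi/2, 3*pi/2}" "t \<le> pi/2 \<or> t \<ge> 3*pi/2"
  shows "g_fun (cis t) = 1"
proof -
  have "cos t > 0"
  proof (cases "t \<le> pi/2")
    case True
    then show ?thesis using assms by (intro cos_gt_zero_pi) auto
  next
    case False
    then have "cos (t - 2*pi) > 0" using assms by (intro cos_gt_zero_pi) auto
    then show ?thesis by (simp add: cos_diff)
  qed
  then show ?thesis by (simp add: g_fun_def)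
qed

lemma g_fun_cis_eq_minus_1:
  assumes "t \<in> {pi/2<..<3*pi/2}"
  shows "g_fun (cis t) = -1"
proof -
  have "cos (t - pi) > 0" using assms by (intro cos_gt_zero_pi) auto
  then have "cos t < 0" by (simp add: cos_diff)
  then show ?thesis by (simp add: g_fun_def)
qed

lemma has_integral_g_fun_mult:
  fixes c :: "real \<Rightarrow> complex"
  assumes c1: "(c has_integral I1) {0..pi/2}" and c2: "(c has_integral I2) {pi/2..3*pi/2}"
    and c3: "(c has_integral I3) {3*pi/2..2*pi}"
  shows "((\<lambda>t. g_fun (cis t) * c t) has_integral (I1 - I2 + I3)) {0..2*pi}"
proof -
  have fin: "finite {pi/2, 3*pi/2}" by simp
  have h1: "((\<lambda>t. g_fun (cis t) * c t) has_integral I1) {0..pi/2}"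
    by (rule has_integral_spike_finite[OF fin _ c1]) (auto intro!: g_fun_cis_eq_1)
  have h2: "((\<lambda>t. g_fun (cis t) * c t) has_integral - I2) {pi/2..3*pi/2}"
    by (rule has_integral_spike_finite[OF fin _ has_integral_neg[OF c2]]) (auto simp: g_fun_cis_eq_minus_1)
  have h3: "((\<lambda>t. g_fun (cis t) * c t) has_integral I3) {3*pi/2..2*pi}"
    by (rule has_integral_spike_finite[OF fin _ c3]) (auto intro!: g_fun_cis_eq_1)
  have "((\<lambda>t. g_fun (cis t) * c t) has_integral (I1 + - I2)) {0..3*pi/2}"
    by (rule has_integral_combine[OF _ _ h1 h2]) auto
  from has_integral_combine[OF _ _ this h3] show ?thesis by simp
qed

lemma has_integral_g_fun_fourier:
  "((\<lambda>t. g_fun (cis t) * cis (- (of_int k * t))) has_integral (2 * pi * g_coeff k)) {0..2*pi}"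
proof (cases "k = 0")
  case True
  have "((\<lambda>t. g_fun (cis t) * 1) has_integral (of_real (pi/2) - of_real pi + of_real (pi/2))) {0..2*pi}"
  proof (rule has_integral_g_fun_mult)
    show "((\<lambda>t. 1) has_integral complex_of_real (pi / 2)) {0..pi / 2}"
      using has_integral_const_real[of "1::complex" 0 "pi/2"] by (simp add: scaleR_conv_of_real)
    show "((\<lambda>t. 1) has_integral complex_of_real pi) {pi / 2..3 * pi / 2}"
      using has_integral_const_real[of "1::complex" "pi/2" "3*pi/2"] by (simp add: scaleR_conv_of_real)
    show "((\<lambda>t. 1) has_integral complex_of_real (pi / 2)) {3 * pi / 2..2 * pi}"
      using has_integral_const_real[of "1::complex" "3*pi/2" "2*pi"] by (simp add: scaleR_conv_of_real)
  qed
  then show ?thesis using True by (simp add: g_coeff_def)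
next
  case False
  define x where "x = of_int k * pi / 2"
  define c where "c = - \<i> * of_int k"
  have "cis (- (of_int k * (3 * pi / 2))) = cis x * cis (2 * pi * (- of_int k))"
    by (simp add: cis_mult x_def algebra_simps)
  also have "cis (2 * pi * (- of_int k)) = 1" by (rule cis_multiple_2pi) simp
  finally have cis3: "cis (- (of_int k * (3 * pi / 2))) = cis x" by simp
  have cis4: "cis (- (of_int k * (2 * pi))) = 1"
    using cis_multiple_2pi[of "- of_int k"] by (simp add: mult_ac)
  have cis1: "cis (- (of_int k * (pi / 2))) = cis (- x)" by (simp add: x_def)
  have "((\<lambda>t. g_fun (cis t) * cis (- (of_int k * t))) has_integral
      ((cis (- (of_int k * (pi/2))) - cis (- (of_int k * 0))) / c
       - (cis (- (of_int k * (3*pi/2))) - cis (- (of_int k * (pi/2)))) / c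
       + (cis (- (of_int k * (2*pi))) - cis (- (of_int k * (3*pi/2)))) / c)) {0..2*pi}"
    unfolding c_def by (intro has_integral_g_fun_mult has_integral_cis_interval False) auto
  then have "((\<lambda>t. g_fun (cis t) * cis (- (of_int k * t))) has_integral
      ((cis (- x) - 1) / c - (cis x - cis (- x)) / c + (1 - cis x) / c)) {0..2*pi}"
    by (simp only: cis1 cis3 cis4 mult_zero_right minus_zero cis_zero)
  moreover have "(cis (- x) - 1) / c - (cis x - cis (- x)) / c + (1 - cis x) / c = 2 * (cis (- x) - cis x) / c"
    using False by (simp add: c_def field_simps)
  moreover have "cis (- x) - cis x = - 2 * \<i> * of_real (sin x)"
    by (simp add: complex_eq_iff)
  moreover have "2 * (- 2 * \<i> * of_real (sin x)) / c = 2 * pi * g_coeff k"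
    using False by (simp add: c_def g_coeff_def x_def field_simps)
  ultimately show ?thesis by simp
qed

lemma has_integral_g_lam_fourier:
  "((\<lambda>t. (g_fun (cis t) + lam) * cis (- (of_int k * t))) has_integral
     (2 * pi * (g_coeff k + (if k = 0 then lam else 0)))) {0..2*pi}"
proof -
  have "((\<lambda>t. g_fun (cis t) * cis (- (of_int k * t)) + lam * cis (of_int (- k) * t)) has_integral
          (2 * pi * g_coeff k + lam * (if - k = 0 then 2 * pi else 0))) {0..2*pi}"
    by (intro has_integral_add has_integral_g_fun_fourier has_integral_mult_right has_integral_cis_int)
  then show ?thesis by (rule has_integral_eqI) (auto simp: algebra_simps)
qed

lemma fourier_coeff_g_lam:
  "fourier_coeff (\<lambda>z. g_fun z + lam) k = g_coeff k + (if k = 0 then lam else 0)"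
  unfolding fourier_coeff_def using integral_unique[OF has_integral_g_lam_fourier] by simp

lemma has_integral_g_fun_quadratic_form:
  fixes v :: "nat \<Rightarrow> complex"
  obtains A where
    "((\<lambda>t. g_fun (cis t) * of_real ((cmod (\<Sum>k<m. v k * cis (real k * t)))\<^sup>2)) has_integral of_real A)
       {0..2*pi}"
    "\<bar>A\<bar> \<le> 2 * pi * (\<Sum>k<m. (cmod (v k))\<^sup>2)"
proof -
  define p where "p t = (cmod (\<Sum>k<m. v k * cis (real k * t)))\<^sup>2" for t
  define I where "I = 2 * pi * (\<Sum>j<m. cnj (v j) * (\<Sum>k<m. fourier_coeff g_fun (int j - int k) * v k))"
  have I: "((\<lambda>t. g_fun (cis t) * of_real (p t)) has_integral I) {0..2*pi}"
    unfolding p_def I_def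
    by (rule has_integral_toeplitz_quadratic_form[OF has_integral_integrable[OF has_integral_g_fun_fourier]])
  then have "((\<lambda>t. of_real (sgn (cos t) * p t)) has_integral I) {0..2*pi}"
    by (simp add: g_fun_cis)
  from has_integral_Re[OF this] has_integral_Im[OF this]
  have I_Re: "((\<lambda>t. sgn (cos t) * p t) has_integral Re I) {0..2*pi}" and "Im I = 0"
    by (simp_all add: has_integral_0_eq)
  then have I_real: "I = of_real (Re I)" by (simp add: complex_eq_iff)
  have "(p has_integral 2 * pi * (\<Sum>k<m. (cmod (v k))\<^sup>2)) {0..2*pi}"
    using has_integral_Re[OF has_integral_norm_trigonometric_polynomial_squared[of v m]]
    unfolding p_def[abs_def] by simp
  moreover have "p t \<ge> 0" for t by (simp add: p_def)
  ultimately have "\<bar>Re I\<bar> \<le> 2 * pi * (\<Sum>k<m. (cmod (v k))\<^sup>2)"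
    using has_integral_le[OF I_Re] has_integral_le[OF has_integral_neg[OF I_Re]]
    by (fastforce simp: abs_le_iff sgn_if)
  moreover have "((\<lambda>t. g_fun (cis t) * of_real ((cmod (\<Sum>k<m. v k * cis (real k * t)))\<^sup>2))
      has_integral of_real (Re I)) {0..2*pi}"
    using I I_real unfolding p_def by simp
  ultimately show ?thesis using that by blast
qed

lemma det_toeplitz_g_lam_nonzero:
  assumes lam: "lam \<notin> complex_of_real ` {-1..1}"
  shows "det (toeplitz_mat m (\<lambda>z. g_fun z + lam)) \<noteq> 0"
proof
  define T where "T = toeplitz_mat m (\<lambda>z. g_fun z + lam)"
  assume "det (toeplitz_mat m (\<lambda>z. g_fun z + lam)) = 0"
  then obtain v where v: "v \<in> carrier_vec m" "v \<noteq> 0\<^sub>v m" "T *\<^sub>v v = 0\<^sub>v m"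
    using det_0_iff_vec_prod_zero[of T m] by (auto simp: T_def toeplitz_mat_def)
  define p where "p t = (cmod (\<Sum>k<m. v $ k * cis (real k * t)))\<^sup>2" for t
  define P where "P = 2 * pi * (\<Sum>k<m. (cmod (v $ k))\<^sup>2)"
  obtain A where A: "((\<lambda>t. g_fun (cis t) * of_real (p t)) has_integral of_real A) {0..2*pi}" "\<bar>A\<bar> \<le> P"
    using has_integral_g_fun_quadratic_form[where v = "\<lambda>k. v $ k" and m = m] unfolding p_def P_def by blast
  have "(\<Sum>k<m. fourier_coeff (\<lambda>z. g_fun z + lam) (int j - int k) * v $ k) = 0" if "j < m" for j
    using v(1) arg_cong[OF v(3), of "\<lambda>w. vec_index w j"] that
    by (simp add: T_def toeplitz_mat_def scalar_prod_def atLeast0LessThan)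
  then have "((\<lambda>t. (g_fun (cis t) + lam) * of_real (p t)) has_integral 0) {0..2*pi}"
    using has_integral_toeplitz_quadratic_form[where v = "\<lambda>k. v $ k" and m = m,
        OF has_integral_integrable[OF has_integral_g_lam_fourier[of lam]]]
    unfolding p_def by simp
  moreover have "((\<lambda>t. (g_fun (cis t) + lam) * of_real (p t)) has_integral of_real A + lam * of_real P)
      {0..2*pi}"
    using has_integral_add[OF A(1) has_integral_mult_right[OF
          has_integral_norm_trigonometric_polynomial_squared[where v = "\<lambda>k. v $ k" and m = m], of lam]]
    unfolding p_def P_def by (simp add: algebra_simps)
  ultimately have "of_real A + lam * of_real P = 0" by (rule has_integral_unique[symmetric])
  moreover have "P > 0"
  proof -
    obtain j where "j < m" "v $ j \<noteq> 0" using v(1,2) by (auto simp: vec_eq_iff)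
    then show ?thesis unfolding P_def by (intro mult_pos_pos sum_pos2[of _ j]) auto
  qed
  ultimately have "lam = of_real (- A / P)"
    by (simp add: field_simps eq_neg_iff_add_eq_0)
  moreover have "- A / P \<in> {-1..1}"
    using A(2) \<open>P > 0\<close> by (auto simp: field_simps abs_le_iff)
  ultimately show False using lam by blast
qed

lemma mat_inverse_mult_vec:
  fixes T :: "'a :: field mat"
  assumes T: "T \<in> carrier_mat n n" and "det T \<noteq> 0" and w: "w \<in> carrier_vec n"
  shows "the (mat_inverse T) *\<^sub>v (T *\<^sub>v w) = w"
proof -
  have "T \<in> Units (ring_mat TYPE('a) n ())"
    by (rule det_non_zero_imp_unit[OF T \<open>det T \<noteq> 0\<close>])
  then obtain B where B: "mat_inverse T = Some B"
    using mat_inverse(1)[OF T, where b = "()"] by (cases "mat_inverse T") auto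
  with mat_inverse(2)[OF T B] have BT: "B * T = 1\<^sub>m n" and B_carrier: "B \<in> carrier_mat n n"
    by auto
  have "B *\<^sub>v (T *\<^sub>v w) = (B * T) *\<^sub>v w"
    using assoc_mult_mat_vec[OF B_carrier T w] by simp
  with B BT w show ?thesis by simp
qed

lemma scalar_prod_g_vec1:
  fixes a :: "nat \<Rightarrow> complex"
  shows "Matrix.scalar_prod (vec m (\<lambda>i. - a (m - i))) (g_vec1 m)
       = - (2 / pi) * (\<Sum>l = 1..m. of_real (sin (real l * pi / 2) / real l) * a l)"
proof -
  have "Matrix.scalar_prod (vec m (\<lambda>i. - a (m - i))) (g_vec1 m)
      = - (\<Sum>i<m. a (Suc (m - Suc i)) * g_coeff (- int (Suc (m - Suc i))))"
    by (simp add: scalar_prod_def g_vec1_def atLeast0LessThan sum_negf[symmetric] Suc_diff_Suc of_nat_diff)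
  also have "\<dots> = - (\<Sum>i<m. a (Suc i) * g_coeff (- int (Suc i)))"
    using sum.nat_diff_reindex[of "\<lambda>i. a (Suc i) * g_coeff (- int (Suc i))" m] by simp
  also have "\<dots> = - (\<Sum>l = 1..m. a l * g_coeff (- int l))"
    using sum.atLeast1_atMost_eq[of "\<lambda>l. a l * g_coeff (- int l)" m] by simp
  also have "\<dots> = - (2 / pi) * (\<Sum>l = 1..m. of_real (sin (real l * pi / 2) / real l) * a l)"
    unfolding sum_distrib_left sum_negf[symmetric]
    by (intro sum.cong refl) (auto simp: g_coeff_def field_simps)
  finally show ?thesis .
qed

section \<open>L2 boundary values\<close>

lemma AE_lebesgue_on_imp_negligible:
  assumes "AE t in lebesgue_on S. P t" "S \<in> sets lebesgue"
  obtains N where "negligible N" "\<And>t. t \<in> S - N \<Longrightarrow> P t"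
proof -
  from AE_E[OF assms(1)] obtain N where N: "{x \<in> space (lebesgue_on S). \<not> P x} \<subseteq> N"
    "emeasure (lebesgue_on S) N = 0" "N \<in> sets (lebesgue_on S)" by blast
  then have "N \<in> null_sets lebesgue" using null_sets_restrict_space[OF assms(2)] by auto
  then have "negligible N" by (simp add: negligible_iff_null_sets)
  with N(1) that show ?thesis by auto
qed

lemma norm_integral_le_off_negligible:
  fixes u :: "real \<Rightarrow> complex"
  assumes u: "(u has_integral E) S" and b: "b integrable_on S" and N: "negligible N"
    and le: "\<And>t. t \<in> S - N \<Longrightarrow> norm (u t) \<le> b t"
  shows "norm E \<le> integral S b"
proof -
  have negl: "negligible (S - (S - N))" by (rule negligible_subset[OF N]) auto
  have u': "(u has_integral E) (S - N)"
    using u has_integral_spike_set_eq[of S "S - N" u] by (auto intro: negligible_subset[OF N])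
  moreover have "b integrable_on (S - N)"
    using b by (rule integrable_spike_set) (auto intro: negligible_subset[OF N])
  ultimately have "norm (integral (S - N) u) \<le> integral (S - N) b"
    by (intro integral_norm_bound_integral le) auto
  moreover have "integral (S - N) b = integral S b"
    by (rule integral_subset_negligible[OF _ negl]) auto
  ultimately show ?thesis using u' by (simp add: integral_unique)
qed

lemma square_integrable_imp_integrable:
  fixes D :: "real \<Rightarrow> real"
  assumes D0: "\<And>t. D t \<ge> 0" and D2: "(\<lambda>t. (D t)\<^sup>2) integrable_on {a..b}"
  shows "D integrable_on {a..b}"
proof -
  have "(\<lambda>t. sqrt ((D t)\<^sup>2)) \<in> borel_measurable (lebesgue_on {a..b})"
    by (rule measurable_compose[OF integrable_imp_measurable[OF D2] borel_measurable_sqrt])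
  then have m: "D \<in> borel_measurable (lebesgue_on {a..b})"
    using D0 by (simp add: real_sqrt_abs)
  have "(\<lambda>t. 1 + (D t)\<^sup>2) integrable_on {a..b}"
    by (intro integrable_add D2 integrable_const_ivl)
  moreover have "\<bar>D t\<bar> \<le> 1 + (D t)\<^sup>2" for t
  proof (cases "D t \<le> 1")
    case True
    then show ?thesis using D0[of t] by (simp add: power2_eq_square add_increasing2)
  next
    case False
    then have "D t \<le> D t * D t" by (simp add: mult_le_cancel_left1)
    then show ?thesis using D0[of t] by (simp add: power2_eq_square)
  qed
  ultimately show ?thesis
    by (intro measurable_bounded_by_integrable_imp_integrable_real[OF m]) auto
qed

lemma integral_le_square_integral:
  fixes D :: "real \<Rightarrow> real"
  assumes D: "D integrable_on {a..b}" and D2: "(\<lambda>t. (D t)\<^sup>2) integrable_on {a..b}"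
    and ab: "a \<le> b" and \<epsilon>: "\<epsilon> > 0"
  shows "integral {a..b} D \<le> (b - a) * (\<epsilon> / 2) + integral {a..b} (\<lambda>t. (D t)\<^sup>2) / (2 * \<epsilon>)"
proof -
  have "D t \<le> \<epsilon> / 2 + (D t)\<^sup>2 / (2 * \<epsilon>)" for t
  proof -
    have "0 \<le> (D t - \<epsilon>)\<^sup>2" by simp
    then show ?thesis using \<epsilon> by (simp add: field_simps power2_eq_square)
  qed
  moreover have "((\<lambda>t. \<epsilon> / 2 + (D t)\<^sup>2 / (2 * \<epsilon>)) has_integral
      ((b - a) * (\<epsilon> / 2) + integral {a..b} (\<lambda>t. (D t)\<^sup>2) / (2 * \<epsilon>))) {a..b}"
    using has_integral_const_real[of "\<epsilon> / 2" a b] ab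
    by (intro has_integral_add has_integral_divide integrable_integral D2) auto
  ultimately show ?thesis
    by (intro has_integral_le[OF integrable_integral[OF D]]) auto
qed

lemma L2_tendsto_imp_L1_tendsto:
  fixes D :: "'a \<Rightarrow> real \<Rightarrow> real"
  assumes ab: "a \<le> b" and D0: "\<And>r t. D r t \<ge> 0"
    and int2: "\<forall>\<^sub>F r in F. (\<lambda>t. (D r t)\<^sup>2) integrable_on {a..b}"
    and lim2: "((\<lambda>r. integral {a..b} (\<lambda>t. (D r t)\<^sup>2)) \<longlongrightarrow> 0) F"
  shows "\<forall>\<^sub>F r in F. D r integrable_on {a..b}"
    and "((\<lambda>r. integral {a..b} (D r)) \<longlongrightarrow> 0) F"
proof -
  show "\<forall>\<^sub>F r in F. D r integrable_on {a..b}"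
    using int2 by eventually_elim (rule square_integrable_imp_integrable[OF D0])
  show "((\<lambda>r. integral {a..b} (D r)) \<longlongrightarrow> 0) F"
  proof (rule tendstoI)
    fix e :: real assume e: "e > 0"
    define \<epsilon> where "\<epsilon> = e / (2 * (b - a + 1))"
    have "(b - a) / (2 * (b - a + 1)) < 1" using ab by (simp add: field_simps)
    then have "e * ((b - a) / (2 * (b - a + 1))) < e * 1" using e by (intro mult_strict_left_mono)
    then have \<epsilon>: "\<epsilon> > 0" "\<epsilon> * (b - a) < e" using e ab by (simp_all add: \<epsilon>_def)
    have "\<forall>\<^sub>F r in F. dist (integral {a..b} (\<lambda>t. (D r t)\<^sup>2)) 0 < \<epsilon> * e"
      using tendstoD[OF lim2, of "\<epsilon> * e"] \<epsilon> e by simp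
    with int2 show "\<forall>\<^sub>F r in F. dist (integral {a..b} (D r)) 0 < e"
    proof eventually_elim
      case (elim r)
      have iD: "D r integrable_on {a..b}" by (rule square_integrable_imp_integrable[OF D0 elim(1)])
      have "integral {a..b} (D r)
          \<le> (b - a) * (\<epsilon> / 2) + integral {a..b} (\<lambda>t. (D r t)\<^sup>2) / (2 * \<epsilon>)"
        by (rule integral_le_square_integral[OF iD elim(1) ab \<epsilon>(1)])
      also have "\<dots> < e / 2 + e / 2"
      proof -
        have "integral {a..b} (\<lambda>t. (D r t)\<^sup>2) < \<epsilon> * e" using elim(2) by (simp add: dist_real_def)
        then have "integral {a..b} (\<lambda>t. (D r t)\<^sup>2) / (2 * \<epsilon>) < e / 2"
          using \<epsilon> by (simp add: field_simps)
        then show ?thesis using \<epsilon>(2) by (simp add: field_simps)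
      qed
      finally have "integral {a..b} (D r) < e" by simp
      moreover have "integral {a..b} (D r) \<ge> 0"
        by (rule integral_nonneg[OF iD]) (simp add: D0)
      ultimately show ?case by (simp add: dist_real_def)
    qed
  qed
qed

lemma filterlim_2_minus_at_left_1: "filterlim (\<lambda>r::real. 2 - r) (at_right 1) (at_left 1)"
  unfolding filterlim_at
proof
  have "eventually (\<lambda>x. x \<in> {0<..<1}) (at_left (1::real))" by (rule eventually_at_left_real) simp
  then show "\<forall>\<^sub>F x in at_left (1::real). 2 - x \<in> {1::real<..} \<and> 2 - x \<noteq> 1"
    by eventually_elim auto
  have "((\<lambda>r::real. 2 - r) \<longlongrightarrow> 2 - 1) (at_left 1)"
    by (intro tendsto_intros)
  then show "((\<lambda>r::real. 2 - r) \<longlongrightarrow> 1) (at_left 1)" by simp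
qed

lemma continuous_on_circle:
  assumes "f holomorphic_on A" "\<And>t. of_real r * cis t \<in> A"
  shows "continuous_on B (\<lambda>t. f (of_real r * cis t))"
proof -
  have "continuous_on B (\<lambda>t. of_real r * cis t)" by (intro continuous_intros)
  moreover have "(\<lambda>t. of_real r * cis t) ` B \<subseteq> A" using assms(2) by auto
  ultimately show ?thesis
    by (rule continuous_on_compose2[OF holomorphic_on_imp_continuous_on[OF assms(1)]])
qed

section \<open>Solutions of the Riemann-Hilbert problem\<close>

lemma norm_entry_le: "norm (entry A i j) \<le> norm A"
  unfolding entry_def
  using Finite_Cartesian_Product.norm_nth_le[of "A $ i" j] Finite_Cartesian_Product.norm_nth_le[of A i]
  by linarith

lemma entry_diff: "entry (A - B) i j = entry A i j - entry B i j"
  unfolding entry_def by simp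

lemma jump_mat_entries:
  fixes A :: "complex^2^2" and \<phi> :: "complex \<Rightarrow> complex" and t :: real and m :: nat
  defines "B \<equiv> A ** jump_mat m \<phi> (cis t)"
  shows "cis (real m * t) * entry B 1 1 + entry B 1 2 = cis (real m * t) * entry A 1 1 + entry A 1 2"
    and "entry B 1 1 - entry A 1 1
           = (\<phi> (cis t) - 1) * cis (- (real m * t)) * (cis (real m * t) * entry A 1 1 + entry A 1 2)"
proof -
  have c: "cis (real m * t) * cis (- (real m * t)) = 1" by (simp add: cis_mult)
  have inv_pow: "inverse (cis t) ^ m = cis (- (real m * t))" "cis (- t) ^ m = cis (- (real m * t))"
    by (simp_all add: Complex.DeMoivre)
  have B11: "entry B 1 1 = entry A 1 1 * \<phi> (cis t) + entry A 1 2 * ((\<phi> (cis t) - 1) * cis (- (real m * t)))"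
    unfolding B_def entry_def jump_mat_def matrix_matrix_mult_def by (simp add: sum_2 inv_pow)
  have B12: "entry B 1 2 = entry A 1 1 * (- (\<phi> (cis t) - 1) * cis (real m * t)) + entry A 1 2 * (2 - \<phi> (cis t))"
    unfolding B_def entry_def jump_mat_def matrix_matrix_mult_def by (simp add: sum_2 Complex.DeMoivre)
  have ring1: "c * (x * p + y * ((p - 1) * d)) + (x * (- (p - 1) * c) + y * (2 - p)) = c * x + y"
    if "c * d = 1" for c d x y p :: complex
  proof -
    have "c * (x * p + y * ((p - 1) * d)) + (x * (- (p - 1) * c) + y * (2 - p))
        = c * x + y + y * (p - 1) * (c * d - 1)"
      by (simp add: algebra_simps)
    with that show ?thesis by simp
  qed
  have ring2: "x * p + y * ((p - 1) * d) - x = (p - 1) * d * (c * x + y)"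
    if "c * d = 1" for c d x y p :: complex
  proof -
    have "(p - 1) * d * (c * x + y) = (p - 1) * x * (c * d) + y * ((p - 1) * d)"
      by (simp add: algebra_simps)
    with that show ?thesis by (simp add: algebra_simps)
  qed
  show "cis (real m * t) * entry B 1 1 + entry B 1 2 = cis (real m * t) * entry A 1 1 + entry A 1 2"
    unfolding B11 B12 by (rule ring1[OF c])
  show "entry B 1 1 - entry A 1 1
      = (\<phi> (cis t) - 1) * cis (- (real m * t)) * (cis (real m * t) * entry A 1 1 + entry A 1 2)"
    unfolding B11 by (rule ring2[OF c])
qed

locale RHP_solution =
  fixes m :: nat and \<phi> :: "complex \<Rightarrow> complex" and Y :: "complex \<Rightarrow> complex^2^2"
    and M :: "nat \<Rightarrow> complex^2^2" and Yp Ym :: "complex \<Rightarrow> complex^2^2"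
  assumes holomorphic: "\<And>i j. (\<lambda>z. entry (Y z) i j) holomorphic_on - sphere 0 1"
    and inner_boundary_value: "L2_boundary_value Y Yp (at_left 1)"
    and outer_boundary_value: "L2_boundary_value Y Ym (at_right 1)"
    and jump: "AE t in lebesgue_on {0..2*pi}. Yp (cis t) = Ym (cis t) ** jump_mat m \<phi> (cis t)"
    and expansion: "\<And>z i j. norm z > 1 \<Longrightarrow>
      (\<lambda>l. entry (M (Suc l)) i j / z ^ Suc l) sums (entry (Y z) i j - (if i = j then 1 else 0))"
    and phi_bounded: "bounded (range (\<lambda>t. \<phi> (cis t)))"
    and phi_fourier_integrable:
      "\<And>k. (\<lambda>t. \<phi> (cis t) * cis (- (of_int k * t))) integrable_on {0..2*pi}"
begin

abbreviation y :: "2 \<Rightarrow> 2 \<Rightarrow> complex \<Rightarrow> complex" where "y i j z \<equiv> entry (Y z) i j"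
abbreviation yp :: "2 \<Rightarrow> 2 \<Rightarrow> real \<Rightarrow> complex" where "yp i j t \<equiv> entry (Yp (cis t)) i j"
abbreviation ym :: "2 \<Rightarrow> 2 \<Rightarrow> real \<Rightarrow> complex" where "ym i j t \<equiv> entry (Ym (cis t)) i j"

lemma holomorphic_inside: "(\<lambda>z. y i j z) holomorphic_on ball 0 1"
  using holomorphic by (rule holomorphic_on_subset) auto

lemma continuous_on_radius:
  assumes "0 \<le> r" "r \<noteq> 1"
  shows "continuous_on A (\<lambda>t. y i j (of_real r * cis t))"
  using holomorphic assms by (intro continuous_on_circle) (auto simp: norm_mult)

definition inner_dev :: "real \<Rightarrow> real \<Rightarrow> real" where
  "inner_dev r t = norm (Y (of_real r * cis t) - Yp (cis t))"

definition outer_dev :: "real \<Rightarrow> real \<Rightarrow> real" where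
  "outer_dev r t = norm (Y (of_real r * cis t) - Ym (cis t))"

lemma inner_dev_L1:
  shows "\<forall>\<^sub>F r in at_left 1. inner_dev r integrable_on {0..2*pi}"
    and "((\<lambda>r. integral {0..2*pi} (inner_dev r)) \<longlongrightarrow> 0) (at_left 1)"
  using L2_tendsto_imp_L1_tendsto[of 0 "2*pi" inner_dev] inner_boundary_value
  unfolding L2_boundary_value_def inner_dev_def by auto

lemma outer_dev_L1:
  shows "\<forall>\<^sub>F r in at_left 1. outer_dev (2 - r) integrable_on {0..2*pi}"
    and "((\<lambda>r. integral {0..2*pi} (outer_dev (2 - r))) \<longlongrightarrow> 0) (at_left 1)"
proof -
  have "\<forall>\<^sub>F r in at_right 1. outer_dev r integrable_on {0..2*pi}"
    and "((\<lambda>r. integral {0..2*pi} (outer_dev r)) \<longlongrightarrow> 0) (at_right 1)"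
    using L2_tendsto_imp_L1_tendsto[of 0 "2*pi" outer_dev] outer_boundary_value
    unfolding L2_boundary_value_def outer_dev_def by auto
  then show "\<forall>\<^sub>F r in at_left 1. outer_dev (2 - r) integrable_on {0..2*pi}"
    and "((\<lambda>r. integral {0..2*pi} (outer_dev (2 - r))) \<longlongrightarrow> 0) (at_left 1)"
    using eventually_compose_filterlim filterlim_compose filterlim_2_minus_at_left_1 by blast+
qed

lemma jump_outside_negligible:
  obtains N where "negligible N"
    "\<And>t. t \<in> {0..2*pi} - N \<Longrightarrow> Yp (cis t) = Ym (cis t) ** jump_mat m \<phi> (cis t)"
  using AE_lebesgue_on_imp_negligible[OF jump] by auto

lemma inner_boundary_11_majorant:
  obtains W where "W integrable_on {0..2*pi}" "\<And>t. norm (yp 1 1 t) \<le> W t"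
proof -
  have "\<forall>\<^sub>F r in at_left (1::real). r \<in> {0<..<1}" by (rule eventually_at_left_real) simp
  then obtain r0 where r0: "r0 \<in> {0<..<1}" "inner_dev r0 integrable_on {0..2*pi}"
    using eventually_happens'[OF trivial_limit_at_left_real eventually_conj[OF _ inner_dev_L1(1)]]
    by blast
  define W where "W t = inner_dev r0 t + norm (y 1 1 (of_real r0 * cis t))" for t
  have "(\<lambda>t. norm (y 1 1 (of_real r0 * cis t))) integrable_on {0..2*pi}"
    using r0 by (intro integrable_continuous_interval continuous_intros continuous_on_radius) auto
  then have "W integrable_on {0..2*pi}" unfolding W_def using r0(2) by (intro integrable_add)
  moreover have "norm (yp 1 1 t) \<le> W t" for t
  proof -
    have "norm (y 1 1 (of_real r0 * cis t) - yp 1 1 t) \<le> inner_dev r0 t"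
      unfolding inner_dev_def entry_diff[symmetric] by (rule norm_entry_le)
    then show ?thesis
      unfolding W_def by (metis add.commute norm_minus_commute norm_triangle_sub order_trans add_right_mono)
  qed
  ultimately show ?thesis using that by blast
qed

(* The inner radius r and the outer radius 2 - r tend to 1 together, so the single filter
   at_left 1 controls both one-sided boundary limits. *)
definition dominant :: "(real \<Rightarrow> real) \<Rightarrow> real \<Rightarrow> real \<Rightarrow> real" where
  "dominant W r t = 3 * inner_dev r t + (1 - r ^ m) * W t + 2 * outer_dev (2 - r) t"

lemma limit_eq_0_if_dominated:
  fixes w :: "real \<Rightarrow> real \<Rightarrow> complex"
  assumes W: "W integrable_on {0..2*pi}" and N: "negligible N"
    and w: "\<And>r. r \<in> {0<..<1} \<Longrightarrow> (w r has_integral E r) {0..2*pi}"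
    and bound: "\<And>r t. r \<in> {0<..<1} \<Longrightarrow> t \<in> {0..2*pi} - N \<Longrightarrow> norm (w r t) \<le> K * dominant W r t"
    and E: "(E \<longlongrightarrow> E0) (at_left 1)"
  shows "E0 = 0"
proof -
  define I where "I r = K * (3 * integral {0..2*pi} (inner_dev r) + (1 - r ^ m) * integral {0..2*pi} W
      + 2 * integral {0..2*pi} (outer_dev (2 - r)))" for r
  have "\<forall>\<^sub>F r in at_left 1. r \<in> {0<..<1::real}" by (rule eventually_at_left_real) simp
  with inner_dev_L1(1) outer_dev_L1(1) have "\<forall>\<^sub>F r in at_left 1. norm (E r) \<le> I r"
  proof eventually_elim
    case (elim r)
    have dom: "((\<lambda>t. K * dominant W r t) has_integral I r) {0..2*pi}"
      unfolding dominant_def I_def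
      by (intro has_integral_mult_right has_integral_add integrable_integral elim W)
    have "norm (E r) \<le> integral {0..2*pi} (\<lambda>t. K * dominant W r t)"
      by (rule norm_integral_le_off_negligible[OF w[OF elim(3)] has_integral_integrable[OF dom] N
            bound[OF elim(3)]])
    also have "\<dots> = I r" using dom by (rule integral_unique)
    finally show ?case .
  qed
  moreover have "(I \<longlongrightarrow> 0) (at_left 1)"
  proof -
    have "(I \<longlongrightarrow> K * (3 * 0 + (1 - 1 ^ m) * integral {0..2*pi} W + 2 * 0)) (at_left 1)"
      unfolding I_def by (intro tendsto_intros inner_dev_L1(2) outer_dev_L1(2))
    then show ?thesis by simp
  qed
  ultimately have "(E \<longlongrightarrow> 0) (at_left 1)" by (rule Lim_null_comparison)
  from tendsto_unique[OF trivial_limit_at_left_real E this] show ?thesis .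
qed

definition H :: "complex \<Rightarrow> complex" where
  "H z = z ^ m * y 1 1 z + y 1 2 z"

definition H_coeff :: "nat \<Rightarrow> complex" where
  "H_coeff n = (deriv ^^ n) H 0 / fact n"

definition outer_coeff :: "2 \<Rightarrow> 2 \<Rightarrow> real \<Rightarrow> int \<Rightarrow> complex" where
  "outer_coeff i j s n = (if n = 0 \<and> i = j then 1 else 0)
     + (if n < 0 then entry (M (nat (- n))) i j / of_real s ^ nat (- n) else 0)"

lemma holomorphic_H: "H holomorphic_on ball 0 1"
  unfolding H_def by (intro holomorphic_intros holomorphic_inside)

lemma has_integral_H:
  assumes "0 \<le> r" "r < 1"
  shows "((\<lambda>t. H (of_real r * cis t) * cis (- (of_int n * t))) has_integral
           (2 * pi * (if n \<ge> 0 then H_coeff (nat n) * of_real r ^ nat n else 0))) {0..2*pi}"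
  unfolding H_coeff_def by (rule has_integral_holomorphic_on_circle[OF holomorphic_H assms])

lemma has_integral_outer:
  assumes "s > 1"
  shows "((\<lambda>t. y i j (of_real s * cis t) * cis (- (of_int n * t))) has_integral
           (2 * pi * outer_coeff i j s n)) {0..2*pi}"
proof -
  have "((\<lambda>t. (y i j (of_real s * cis t) - (if i = j then 1 else 0)) * cis (- (of_int n * t)))
      has_integral (2 * pi * (if n < 0 then entry (M (nat (- n))) i j / of_real s ^ nat (- n) else 0)))
      {0..2*pi}"
    by (rule has_integral_laurent_series_on_circle[where b = "\<lambda>l. entry (M l) i j"
          and G = "\<lambda>z. y i j z - (if i = j then 1 else 0)", OF expansion assms])
  moreover have "((\<lambda>t. (if i = j then 1 else 0) * cis (of_int (- n) * t)) has_integral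
      (if i = j then 1 else 0 :: complex) * (if - n = 0 then 2 * pi else 0)) {0..2*pi}"
    by (rule has_integral_mult_right[OF has_integral_cis_int])
  ultimately show ?thesis
    by (rule has_integral_eqI[OF has_integral_add]) (auto simp: outer_coeff_def algebra_simps)
qed

lemma norm_H_minus_inner_boundary_le:
  assumes r: "0 \<le> r" "r \<le> 1" and W: "norm (yp 1 1 t) \<le> W"
  shows "norm (H (of_real r * cis t) - (cis (real m * t) * yp 1 1 t + yp 1 2 t))
           \<le> 3 * inner_dev r t + (1 - r ^ m) * W"
proof -
  define a b c D where "a = y 1 1 (of_real r * cis t)" and "b = y 1 2 (of_real r * cis t)"
    and "c = cis (real m * t)" and "D = inner_dev r t"
  have Da: "norm (a - yp 1 1 t) \<le> D" and Db: "norm (b - yp 1 2 t) \<le> D"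
    unfolding a_def b_def D_def inner_dev_def entry_diff[symmetric] by (rule norm_entry_le)+
  have q: "0 \<le> r ^ m" "r ^ m \<le> 1" using r by (auto simp: power_le_one)
  have "H (of_real r * cis t) = of_real (r ^ m) * c * a + b"
    by (simp add: H_def a_def b_def c_def power_mult_distrib Complex.DeMoivre)
  then have "H (of_real r * cis t) - (c * yp 1 1 t + yp 1 2 t)
      = c * (a - yp 1 1 t) - of_real (1 - r ^ m) * (c * a) + (b - yp 1 2 t)"
    by (simp add: algebra_simps)
  also have "norm \<dots> \<le> norm (c * (a - yp 1 1 t)) + norm (of_real (1 - r ^ m) * (c * a)) + norm (b - yp 1 2 t)"
    by (rule order.trans[OF norm_triangle_ineq add_right_mono[OF norm_triangle_ineq4]])
  also have "\<dots> = norm (a - yp 1 1 t) + (1 - r ^ m) * norm a + norm (b - yp 1 2 t)"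
    unfolding norm_mult norm_of_real c_def norm_cis using q by simp
  also have "\<dots> \<le> D + (1 - r ^ m) * (D + W) + D"
  proof -
    have "norm a \<le> D + W" using Da W norm_triangle_sub[of a "yp 1 1 t"] by linarith
    then have "(1 - r ^ m) * norm a \<le> (1 - r ^ m) * (D + W)" using q by (intro mult_left_mono) auto
    then show ?thesis using Da Db by linarith
  qed
  also have "\<dots> \<le> 3 * D + (1 - r ^ m) * W"
  proof -
    have "D \<ge> 0" using Da norm_ge_zero order.trans by blast
    then have "(1 - r ^ m) * D \<le> D" using q by (simp add: mult_left_le_one_le)
    then show ?thesis by (simp add: algebra_simps)
  qed
  finally show ?thesis by (simp add: c_def D_def)
qed

lemma norm_outer_combination_minus_boundary_le:
  "norm (cis (real m * t) * y 1 1 (of_real s * cis t) + y 1 2 (of_real s * cis t)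
     - (cis (real m * t) * ym 1 1 t + ym 1 2 t)) \<le> 2 * outer_dev s t"
proof -
  have D: "norm (y i j (of_real s * cis t) - ym i j t) \<le> outer_dev s t" for i j
    unfolding outer_dev_def entry_diff[symmetric] by (rule norm_entry_le)
  have "norm (cis (real m * t) * y 1 1 (of_real s * cis t) + y 1 2 (of_real s * cis t)
      - (cis (real m * t) * ym 1 1 t + ym 1 2 t))
      = norm (cis (real m * t) * (y 1 1 (of_real s * cis t) - ym 1 1 t) + (y 1 2 (of_real s * cis t) - ym 1 2 t))"
    by (simp add: algebra_simps)
  also have "\<dots> \<le> norm (y 1 1 (of_real s * cis t) - ym 1 1 t) + norm (y 1 2 (of_real s * cis t) - ym 1 2 t)"
    using norm_triangle_ineq[of "cis (real m * t) * (y 1 1 (of_real s * cis t) - ym 1 1 t)"]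
    by (simp add: norm_mult)
  also have "\<dots> \<le> 2 * outer_dev s t" using D[of 1 1] D[of 1 2] by simp
  finally show ?thesis .
qed

lemma tendsto_outer_coeff: "((\<lambda>r. outer_coeff i j (2 - r) n) \<longlongrightarrow> outer_coeff i j 1 n) (at_left 1)"
proof -
  have "((\<lambda>r::real. of_real (2 - r) :: complex) \<longlongrightarrow> of_real (2 - 1)) (at_left 1)"
    by (intro tendsto_intros)
  then have "((\<lambda>r. entry (M (nat (- n))) i j / of_real (2 - r) ^ nat (- n))
      \<longlongrightarrow> entry (M (nat (- n))) i j / 1 ^ nat (- n)) (at_left 1)"
    by (intro tendsto_intros) auto
  then show ?thesis by (cases "n < 0") (simp_all add: outer_coeff_def)
qed

lemma norm_H_jump_residual_le:
  assumes r: "r \<in> {0<..<1}" and J: "Yp (cis t) = Ym (cis t) ** jump_mat m \<phi> (cis t)"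
    and W: "norm (yp 1 1 t) \<le> W"
  shows "norm (H (of_real r * cis t)
           - (cis (real m * t) * y 1 1 (of_real (2 - r) * cis t) + y 1 2 (of_real (2 - r) * cis t)))
         \<le> 3 * inner_dev r t + (1 - r ^ m) * W + 2 * outer_dev (2 - r) t"
proof -
  have "cis (real m * t) * yp 1 1 t + yp 1 2 t = cis (real m * t) * ym 1 1 t + ym 1 2 t"
    using jump_mat_entries(1)[where A = "Ym (cis t)" and \<phi> = \<phi> and t = t and m = m] J by simp
  then have "norm (H (of_real r * cis t)
        - (cis (real m * t) * y 1 1 (of_real (2 - r) * cis t) + y 1 2 (of_real (2 - r) * cis t)))
      = norm ((H (of_real r * cis t) - (cis (real m * t) * yp 1 1 t + yp 1 2 t))
        - (cis (real m * t) * y 1 1 (of_real (2 - r) * cis t) + y 1 2 (of_real (2 - r) * cis t)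
          - (cis (real m * t) * ym 1 1 t + ym 1 2 t)))"
    by (simp add: algebra_simps)
  also have "\<dots> \<le> (3 * inner_dev r t + (1 - r ^ m) * W) + 2 * outer_dev (2 - r) t"
    using r W
    by (intro order.trans[OF norm_triangle_ineq4 add_mono] norm_H_minus_inner_boundary_le
        norm_outer_combination_minus_boundary_le) auto
  finally show ?thesis by simp
qed

lemma H_coeff_eq_outer_coeff:
  "(if n \<ge> 0 then H_coeff (nat n) else 0) = outer_coeff 1 1 1 (n - int m) + outer_coeff 1 2 1 n"
proof -
  obtain W where W: "W integrable_on {0..2*pi}" "\<And>t. norm (yp 1 1 t) \<le> W t"
    using inner_boundary_11_majorant by blast
  obtain N where N: "negligible N"
    and jumpN: "\<And>t. t \<in> {0..2*pi} - N \<Longrightarrow> Yp (cis t) = Ym (cis t) ** jump_mat m \<phi> (cis t)"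
    using jump_outside_negligible by blast
  define w where "w r t = (H (of_real r * cis t) - (cis (real m * t) * y 1 1 (of_real (2 - r) * cis t)
      + y 1 2 (of_real (2 - r) * cis t))) * cis (- (of_int n * t))" for r t :: real
  define E where "E r = 2 * pi * ((if n \<ge> 0 then H_coeff (nat n) else 0) * of_real r ^ nat n
      - outer_coeff 1 1 (2 - r) (n - int m) - outer_coeff 1 2 (2 - r) n)" for r :: real
  have "2 * pi * ((if n \<ge> 0 then H_coeff (nat n) else 0) * 1
      - outer_coeff 1 1 1 (n - int m) - outer_coeff 1 2 1 n) = 0"
  proof (rule limit_eq_0_if_dominated[OF W(1) N, of w E 1])
    fix r :: real assume r: "r \<in> {0<..<1}"
    have "((\<lambda>t. H (of_real r * cis t) * cis (- (of_int n * t))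
        - (y 1 1 (of_real (2 - r) * cis t) * cis (- (of_int (n - int m) * t))
          + y 1 2 (of_real (2 - r) * cis t) * cis (- (of_int n * t))))
      has_integral (2 * pi * (if n \<ge> 0 then H_coeff (nat n) * of_real r ^ nat n else 0)
        - (2 * pi * outer_coeff 1 1 (2 - r) (n - int m) + 2 * pi * outer_coeff 1 2 (2 - r) n)))
      {0..2*pi}"
      using r by (intro has_integral_diff has_integral_add has_integral_H has_integral_outer) auto
    then show "(w r has_integral E r) {0..2*pi}"
    proof (rule has_integral_eqI)
      fix t
      have "cis (real m * t) * cis (- (of_int n * t)) = cis (- (of_int (n - int m) * t))"
        by (simp add: cis_mult algebra_simps)
      then show "H (of_real r * cis t) * cis (- (of_int n * t))
          - (y 1 1 (of_real (2 - r) * cis t) * cis (- (of_int (n - int m) * t))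
            + y 1 2 (of_real (2 - r) * cis t) * cis (- (of_int n * t))) = w r t"
        unfolding w_def by (simp add: algebra_simps)
    qed (simp add: E_def algebra_simps)
  next
    show "norm (w r t) \<le> 1 * dominant W r t" if "r \<in> {0<..<1}" "t \<in> {0..2*pi} - N" for r t
      using norm_H_jump_residual_le[OF that(1) jumpN[OF that(2)] W(2)]
      unfolding w_def dominant_def norm_mult norm_cis by simp
  next
    have "((\<lambda>r. of_real r ^ nat n :: complex) \<longlongrightarrow> of_real 1 ^ nat n) (at_left 1)"
      by (intro tendsto_intros)
    then show "(E \<longlongrightarrow> 2 * pi * ((if n \<ge> 0 then H_coeff (nat n) else 0) * 1
        - outer_coeff 1 1 1 (n - int m) - outer_coeff 1 2 1 n)) (at_left 1)"
      unfolding E_def by (intro tendsto_intros tendsto_outer_coeff) simp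
  qed
  then have "(if n \<ge> 0 then H_coeff (nat n) else 0) - outer_coeff 1 1 1 (n - int m) - outer_coeff 1 2 1 n = 0"
    by simp
  then show ?thesis by (subst eq_iff_diff_eq_0) (simp only: diff_diff_eq)
qed

lemma H_coeff_above: "n > m \<Longrightarrow> H_coeff n = 0"
  using H_coeff_eq_outer_coeff[of "int n"] by (simp add: outer_coeff_def)

lemma H_coeff_below: "n < m \<Longrightarrow> H_coeff n = entry (M (m - n)) 1 1"
  using H_coeff_eq_outer_coeff[of "int n"] by (simp add: outer_coeff_def nat_diff_distrib)

lemma H_coeff_top: "H_coeff m = 1"
  using H_coeff_eq_outer_coeff[of "int m"] by (simp add: outer_coeff_def)

lemma H_polynomial:
  assumes "norm z < 1"
  shows "H z = (\<Sum>n\<le>m. H_coeff n * z ^ n)"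
proof -
  have "(\<lambda>n. H_coeff n * z ^ n) sums H z"
    using holomorphic_power_series[OF holomorphic_H, of z] assms by (simp add: H_coeff_def)
  moreover have "(\<lambda>n. H_coeff n * z ^ n) sums (\<Sum>n\<le>m. H_coeff n * z ^ n)"
    by (rule sums_finite) (auto simp: H_coeff_above)
  ultimately show ?thesis by (rule sums_unique2)
qed

lemma has_integral_phi_minus_1:
  "((\<lambda>t. (\<phi> (cis t) - 1) * cis (- (of_int j * t))) has_integral
     2 * pi * (fourier_coeff \<phi> j - (if j = 0 then 1 else 0))) {0..2*pi}"
  using has_integral_diff[OF has_integral_fourier_coeff[OF phi_fourier_integrable[of j]]
      has_integral_cis_int[of "- j"]]
  by (rule has_integral_eqI) (auto simp: algebra_simps)

lemma has_integral_jump_11_residual: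
  assumes r: "r \<in> {0<..<1}" and k: "k \<ge> 1"
  shows "((\<lambda>t. (y 1 1 (of_real r * cis t) - y 1 1 (of_real (2 - r) * cis t)
            - (\<phi> (cis t) - 1) * cis (- (real m * t)) * H (of_real r * cis t)) * cis (real k * t))
          has_integral - 2 * pi * outer_coeff 1 1 (2 - r) (- int k) - (\<Sum>n\<le>m. H_coeff n * of_real r ^ n
            * (2 * pi * (fourier_coeff \<phi> (int m - int n - int k) - (if int m - int n - int k = 0 then 1 else 0)))))
         {0..2*pi}"
proof -
  have "((\<lambda>t. y 1 1 (of_real r * cis t) * cis (- (of_int (- int k) * t))
        - y 1 1 (of_real (2 - r) * cis t) * cis (- (of_int (- int k) * t))
        - (\<Sum>n\<le>m. H_coeff n * of_real r ^ n
            * ((\<phi> (cis t) - 1) * cis (- (of_int (int m - int n - int k) * t)))))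
      has_integral (2 * pi * (if - int k \<ge> 0 then (deriv ^^ nat (- int k)) (\<lambda>z. y 1 1 z) 0
          / fact (nat (- int k)) * of_real r ^ nat (- int k) else 0)
        - 2 * pi * outer_coeff 1 1 (2 - r) (- int k)
        - (\<Sum>n\<le>m. H_coeff n * of_real r ^ n
            * (2 * pi * (fourier_coeff \<phi> (int m - int n - int k)
              - (if int m - int n - int k = 0 then 1 else 0)))))) {0..2*pi}"
    using r
    by (intro has_integral_diff has_integral_holomorphic_on_circle[OF holomorphic_inside]
        has_integral_outer has_integral_sum finite_atMost has_integral_mult_right
        has_integral_phi_minus_1) auto
  then show ?thesis
  proof (rule has_integral_eqI)
    fix t
    have "H (of_real r * cis t) = (\<Sum>n\<le>m. H_coeff n * of_real r ^ n * cis (real n * t))"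
      using r by (subst H_polynomial) (auto simp: norm_mult power_mult_distrib Complex.DeMoivre mult.assoc)
    moreover have "cis (- (real m * t)) * cis (real n * t) * cis (real k * t)
        = cis (- (of_int (int m - int n - int k) * t))" for n
      by (simp add: cis_mult algebra_simps)
    ultimately show "y 1 1 (of_real r * cis t) * cis (- (of_int (- int k) * t))
        - y 1 1 (of_real (2 - r) * cis t) * cis (- (of_int (- int k) * t))
        - (\<Sum>n\<le>m. H_coeff n * of_real r ^ n
            * ((\<phi> (cis t) - 1) * cis (- (of_int (int m - int n - int k) * t))))
      = (y 1 1 (of_real r * cis t) - y 1 1 (of_real (2 - r) * cis t)
            - (\<phi> (cis t) - 1) * cis (- (real m * t)) * H (of_real r * cis t)) * cis (real k * t)"
      by (simp add: sum_distrib_left sum_distrib_right algebra_simps)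
  qed (use k in simp)
qed

lemma norm_jump_11_residual_le:
  assumes r: "r \<in> {0<..<1}" and J: "Yp (cis t) = Ym (cis t) ** jump_mat m \<phi> (cis t)"
    and W: "norm (yp 1 1 t) \<le> W" and C: "norm (\<phi> (cis t) - 1) \<le> C"
  shows "norm (y 1 1 (of_real r * cis t) - y 1 1 (of_real (2 - r) * cis t)
           - (\<phi> (cis t) - 1) * cis (- (real m * t)) * H (of_real r * cis t))
         \<le> (1 + C) * (3 * inner_dev r t + (1 - r ^ m) * W + 2 * outer_dev (2 - r) t)"
proof -
  define Hb where "Hb = cis (real m * t) * yp 1 1 t + yp 1 2 t"
  have "Hb = cis (real m * t) * ym 1 1 t + ym 1 2 t"
    using jump_mat_entries(1)[where A = "Ym (cis t)" and \<phi> = \<phi> and t = t and m = m] J by (simp add: Hb_def)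
  then have jump11: "yp 1 1 t - ym 1 1 t = (\<phi> (cis t) - 1) * cis (- (real m * t)) * Hb"
    using jump_mat_entries(2)[where A = "Ym (cis t)" and \<phi> = \<phi> and t = t and m = m] J by simp
  have Dp: "norm (y 1 1 (of_real r * cis t) - yp 1 1 t) \<le> inner_dev r t"
    unfolding inner_dev_def entry_diff[symmetric] by (rule norm_entry_le)
  have Dm: "norm (y 1 1 (of_real (2 - r) * cis t) - ym 1 1 t) \<le> outer_dev (2 - r) t"
    unfolding outer_dev_def entry_diff[symmetric] by (rule norm_entry_le)
  have HD: "norm (H (of_real r * cis t) - Hb) \<le> 3 * inner_dev r t + (1 - r ^ m) * W"
    unfolding Hb_def using r W by (intro norm_H_minus_inner_boundary_le) auto
  have "y 1 1 (of_real r * cis t) - y 1 1 (of_real (2 - r) * cis t)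
        - (\<phi> (cis t) - 1) * cis (- (real m * t)) * H (of_real r * cis t)
      = (y 1 1 (of_real r * cis t) - yp 1 1 t) - (y 1 1 (of_real (2 - r) * cis t) - ym 1 1 t)
        - (\<phi> (cis t) - 1) * cis (- (real m * t)) * (H (of_real r * cis t) - Hb)"
    using jump11 by (simp add: algebra_simps)
  also have "norm \<dots> \<le> inner_dev r t + outer_dev (2 - r) t + C * (3 * inner_dev r t + (1 - r ^ m) * W)"
  proof -
    have "norm ((\<phi> (cis t) - 1) * cis (- (real m * t)) * (H (of_real r * cis t) - Hb))
        \<le> C * (3 * inner_dev r t + (1 - r ^ m) * W)"
      unfolding norm_mult norm_cis using C HD by (simp add: mult_mono')
    then show ?thesis
      using Dp Dm norm_triangle_ineq4 order_trans add_mono by (smt (verit, best))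
  qed
  also have "\<dots> \<le> (1 + C) * (3 * inner_dev r t + (1 - r ^ m) * W + 2 * outer_dev (2 - r) t)"
  proof -
    have "0 \<le> W" "0 \<le> C" using W C norm_ge_zero order_trans by blast+
    moreover have "0 \<le> inner_dev r t" "0 \<le> outer_dev (2 - r) t" "r ^ m \<le> 1"
      using r by (auto simp: inner_dev_def outer_dev_def power_le_one)
    ultimately have "0 \<le> (1 - r ^ m) * W" "0 \<le> C * outer_dev (2 - r) t"
      "0 \<le> inner_dev r t" "0 \<le> outer_dev (2 - r) t"
      by simp_all
    moreover have "(1 + C) * (3 * inner_dev r t + (1 - r ^ m) * W + 2 * outer_dev (2 - r) t)
        = inner_dev r t + outer_dev (2 - r) t + C * (3 * inner_dev r t + (1 - r ^ m) * W)
          + (2 * inner_dev r t + (1 - r ^ m) * W + outer_dev (2 - r) t + 2 * (C * outer_dev (2 - r) t))"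
      by (simp add: algebra_simps)
    ultimately show ?thesis by linarith
  qed
  finally show ?thesis .
qed

lemma M_11_convolution_identity:
  assumes k: "k \<ge> 1"
  shows "entry (M k) 1 1 + (\<Sum>n\<le>m. H_coeff n
           * (fourier_coeff \<phi> (int m - int n - int k) - (if int m - int n - int k = 0 then 1 else 0))) = 0"
proof -
  obtain W where W: "W integrable_on {0..2*pi}" "\<And>t. norm (yp 1 1 t) \<le> W t"
    using inner_boundary_11_majorant by blast
  obtain N where N: "negligible N"
    and jumpN: "\<And>t. t \<in> {0..2*pi} - N \<Longrightarrow> Yp (cis t) = Ym (cis t) ** jump_mat m \<phi> (cis t)"
    using jump_outside_negligible by blast
  obtain C where C: "\<And>t. norm (\<phi> (cis t) - 1) \<le> C"
  proof -
    from phi_bounded obtain B where B: "\<And>t. norm (\<phi> (cis t)) \<le> B" by (auto simp: bounded_iff)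
    have "norm (\<phi> (cis t) - 1) \<le> B + 1" for t
      using norm_triangle_ineq4[of "\<phi> (cis t)" 1] B[of t] by simp
    then show ?thesis using that by blast
  qed
  define X where "X n = fourier_coeff \<phi> (int m - int n - int k) - (if int m - int n - int k = 0 then 1 else 0)"
    for n
  define w where "w r t = (y 1 1 (of_real r * cis t) - y 1 1 (of_real (2 - r) * cis t)
      - (\<phi> (cis t) - 1) * cis (- (real m * t)) * H (of_real r * cis t)) * cis (real k * t)" for r t :: real
  define E where "E r = - 2 * pi * outer_coeff 1 1 (2 - r) (- int k)
      - (\<Sum>n\<le>m. H_coeff n * of_real r ^ n * (2 * pi * X n))" for r :: real
  have "- 2 * pi * outer_coeff 1 1 1 (- int k) - (\<Sum>n\<le>m. H_coeff n * 1 ^ n * (2 * pi * X n)) = 0"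
  proof (rule limit_eq_0_if_dominated[OF W(1) N, of w E "1 + C"])
    show "(w r has_integral E r) {0..2*pi}" if "r \<in> {0<..<1}" for r
      unfolding w_def E_def X_def by (rule has_integral_jump_11_residual[OF that k])
    show "norm (w r t) \<le> (1 + C) * dominant W r t" if "r \<in> {0<..<1}" "t \<in> {0..2*pi} - N" for r t
      unfolding w_def dominant_def norm_mult norm_cis
      using norm_jump_11_residual_le[OF that(1) jumpN[OF that(2)] W(2) C] by simp
    have "((\<lambda>r. complex_of_real r) \<longlongrightarrow> of_real 1) (at_left 1)"
      by (intro tendsto_intros)
    then have of_real_lim: "(complex_of_real \<longlongrightarrow> 1) (at_left 1)" by simp
    show "(E \<longlongrightarrow> - 2 * pi * outer_coeff 1 1 1 (- int k)
        - (\<Sum>n\<le>m. H_coeff n * 1 ^ n * (2 * pi * X n))) (at_left 1)"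
      unfolding E_def by (intro tendsto_intros tendsto_outer_coeff of_real_lim)
  qed
  moreover have "- 2 * pi * outer_coeff 1 1 1 (- int k) - (\<Sum>n\<le>m. H_coeff n * 1 ^ n * (2 * pi * X n))
      = - (2 * pi) * (outer_coeff 1 1 1 (- int k) + (\<Sum>n\<le>m. H_coeff n * X n))"
    by (simp add: sum_distrib_left sum_negf algebra_simps)
  ultimately have "outer_coeff 1 1 1 (- int k) + (\<Sum>n\<le>m. H_coeff n * X n) = 0" by simp
  then show ?thesis using k by (simp add: outer_coeff_def X_def)
qed

lemma M_11_solves_toeplitz_system:
  assumes i: "i < m"
  shows "(\<Sum>n<m. fourier_coeff \<phi> (int i - int n) * entry (M (m - n)) 1 1) = - fourier_coeff \<phi> (int i - int m)"
proof -
  define a where "a l = entry (M l) 1 1" for l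
  define X where "X n = fourier_coeff \<phi> (int i - int n) - (if int i - int n = 0 then 1 else 0)" for n
  have "a (m - i) + (\<Sum>n\<le>m. H_coeff n * X n) = 0"
  proof -
    have "int m - int n - int (m - i) = int i - int n" for n using i by simp
    then show ?thesis using M_11_convolution_identity[of "m - i"] i by (simp add: a_def X_def)
  qed
  moreover have "(\<Sum>n\<le>m. H_coeff n * X n) = (\<Sum>n<m. a (m - n) * X n) + fourier_coeff \<phi> (int i - int m)"
    using i by (simp add: lessThan_Suc_atMost[symmetric] H_coeff_below H_coeff_top a_def X_def)
  moreover have "(\<Sum>n<m. fourier_coeff \<phi> (int i - int n) * a (m - n)) = (\<Sum>n<m. a (m - n) * X n) + a (m - i)"
  proof -
    have "(\<Sum>n<m. fourier_coeff \<phi> (int i - int n) * a (m - n))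
        = (\<Sum>n<m. a (m - n) * X n + (if i = n then a (m - n) else 0))"
      by (intro sum.cong refl) (auto simp: X_def algebra_simps)
    then show ?thesis using i by (simp add: sum.distrib)
  qed
  ultimately show ?thesis by (simp add: a_def algebra_simps eq_neg_iff_add_eq_0)
qed

end

lemma RHP_YK_g_lam_imp_RHP_solution:
  assumes Y: "RHP_YK m (\<lambda>z. g_fun z + lam) Y"
    and M: "\<And>z i j. norm z > 1 \<Longrightarrow>
              (\<lambda>l. entry (M (Suc l)) i j / z ^ Suc l) sums (entry (Y z) i j - (if i = j then 1 else 0))"
  obtains Yp Ym where "RHP_solution m (\<lambda>z. g_fun z + lam) Y M Yp Ym"
proof -
  from Y obtain Yp Ym where hol: "\<forall>i j. (\<lambda>z. entry (Y z) i j) holomorphic_on - sphere 0 1"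
    and bv: "L2_boundary_value Y Yp (at_left 1)" "L2_boundary_value Y Ym (at_right 1)"
    and jump: "AE t in lebesgue_on {0..2*pi}. Yp (cis t) = Ym (cis t) ** jump_mat m (\<lambda>z. g_fun z + lam) (cis t)"
    unfolding RHP_YK_def by blast
  have "bounded (range (\<lambda>t. g_fun (cis t) + lam))"
    by (rule boundedI[of _ "1 + norm lam"])
       (auto simp: g_fun_def intro!: order_trans[OF norm_triangle_ineq])
  moreover have "(\<lambda>t. (g_fun (cis t) + lam) * cis (- (of_int k * t))) integrable_on {0..2*pi}" for k
    using has_integral_g_lam_fourier by blast
  ultimately show ?thesis
    using hol bv jump M by (intro that RHP_solution.intro) auto
qed

theorem proposition2:
  fixes m :: nat and lam :: complex and Y :: "complex \<Rightarrow> complex^2^2"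
    and M :: "nat \<Rightarrow> complex^2^2"
  assumes lam: "lam \<notin> complex_of_real ` {-1..1}"
    and Y: "RHP_YK m (\<lambda>z. g_fun z + lam) Y"
    and M: "\<And>z i j. norm z > 1 \<Longrightarrow>
              (\<lambda>l. entry (M (Suc l)) i j / z ^ Suc l) sums (entry (Y z) i j - (if i = j then 1 else 0))"
  shows "Matrix.scalar_prod (the (mat_inverse (toeplitz_mat m (\<lambda>z. g_fun z + lam))) *\<^sub>v g_vec1 m) (g_vec1 m)
         = - (2 / pi) * (\<Sum>l = 1..m. of_real (sin (real l * pi / 2) / real l) * entry (M l) 1 1)"
proof -
  define T where "T = toeplitz_mat m (\<lambda>z. g_fun z + lam)"
  define w where "w = vec m (\<lambda>i. - entry (M (m - i)) 1 1)"
  obtain Yp Ym where "RHP_solution m (\<lambda>z. g_fun z + lam) Y M Yp Ym"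
    using RHP_YK_g_lam_imp_RHP_solution[OF Y M] .
  then interpret RHP_solution m "\<lambda>z. g_fun z + lam" Y M Yp Ym .
  have "T *\<^sub>v w = g_vec1 m"
    using M_11_solves_toeplitz_system
    by (intro eq_vecI) (auto simp: T_def w_def toeplitz_mat_def g_vec1_def scalar_prod_def
        atLeast0LessThan sum_negf fourier_coeff_g_lam)
  then have "the (mat_inverse T) *\<^sub>v g_vec1 m = w"
    using mat_inverse_mult_vec[of T m w] det_toeplitz_g_lam_nonzero[OF lam]
    by (simp add: T_def w_def toeplitz_mat_def)
  moreover have "Matrix.scalar_prod w (g_vec1 m)
      = - (2 / pi) * (\<Sum>l = 1..m. of_real (sin (real l * pi / 2) / real l) * entry (M l) 1 1)"
    unfolding w_def by (rule scalar_prod_g_vec1)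
  ultimately show ?thesis by (simp only: T_def)
qed

end
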